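(* Let $N\ge 2$, $C\ge 0$, $k\ge 1$ and $L\ge 1$ be integers with $C<\frac{N-1}{2}$, $k\le N-1$, and $$\binom{N-1-C}{k}\ \ge\ \frac{1}{2}\binom{N-1}{k}.$$ Let $\mathcal{A}\subseteq\mathbb{R}^L$, $\mathcal{O}$, $\mathcal{M}$ be action, observation and message spaces, and $\hat{\pi}:\mathcal{O}\times\mathcal{M}^k\to\mathcal{A}$ any function. Fix $o\in\mathcal{O}$ and $\mathbf{m}_{\mathrm{benign}},\mathbf{m}_{\mathrm{adv}}\in\mathcal{M}^{N-1}$ differing in at most $C$ coordinates, and let $$\mathcal{A}_{\mathrm{benign}}:=\bigcup_{T\in\mathcal{H}(N-1,k)}\{\hat{\pi}(o,\mathsf{Ablate}(\mathbf{m}_{\mathrm{benign}},T))\}.$$ Let $0<D\le\binom{N-1}{k}$ and let $T_1,\dots,T_D$ be $D$ distinct elements of $\mathcal{H}(N-1,k)$ chosen uniformly at random without replacement. Define $$\widetilde{\pi}_D(o,\mathbf{m}_{\mathrm{adv}}):=\mathsf{Median}\{\hat{\pi}(o,\mathsf{Ablate}(\mathbf{m}_{\mathrm{adv}},T_d))\}_{d=1}^D$$ (coordinate-wise median). Then, with probability at least $$p_D=\frac{\sum_{j=\tilde{D}}^{D}\binom{n_2}{j}\binom{n_1-n_2}{D-j}}{\binom{n_1}{D}},\qquad n_1=\binom{N-1}{k},\ n_2=\binom{N-C-1}{k},\ \tilde{D}=\lfloor D/2\rfloor+1,$$ it holds that $$\widetilde{\pi}_D(o,\mathbf{m}_{\mathrm{adv}})\in\mathsf{Range}(\mathcal{A}_{\mathrm{benign}}):=\{a\in\mathbb{R}^L:\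 \forall\,1\le l\le L,\ \exists\,\underline{a},\overline{a}\in\mathcal{A}_{\mathrm{benign}}\text{ with }\underline{a}_l\le a_l\le\overline{a}_l\}.$$
   Context: For a list $\mathbf{m}=[m_1,\dots,m_n]$ and $T=\{j_1<\dots<j_k\}\subseteq[n]$, $\mathsf{Ablate}(\mathbf{m},T):=[m_{j_1},\dots,m_{j_k}]$. $\mathcal{H}(n,k)$ is the set of all $k$-element subsets of $\{1,\dots,n\}$. $\mathsf{Median}$ of a list of vectors in $\mathbb{R}^L$ is the coordinate-wise median. Setting: an agent receives $N-1$ messages, of which an adversary may corrupt up to $C$, so the received list $\mathbf{m}_{\mathrm{adv}}$ differs from the uncorrupted list $\mathbf{m}_{\mathrm{benign}}$ in at most $C$ positions. Binomial coefficients $\binom{a}{b}$ with $b>a$ or $b<0$ are $0$. *)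

theory Defs
  imports "HOL-Analysis.Analysis" "HOL-Probability.Probability"
begin

definition Hsets :: "nat \<Rightarrow> nat \<Rightarrow> nat set set" where
  "Hsets n k = {T. T \<subseteq> {1..n} \<and> card T = k}"

text \<open>Ablate(m,T) with 1-based positions: the sublist of m at positions in T, in order.\<close>
definition Ablate :: "'m list \<Rightarrow> nat set \<Rightarrow> 'm list" where
  "Ablate ms T = nths ms {i. Suc i \<in> T}"

definition median_real :: "real list \<Rightarrow> real" where
  "median_real xs = (let ys = sort xs; n = length xs in
     if odd n then ys ! (n div 2) else (ys ! (n div 2 - 1) + ys ! (n div 2)) / 2)"

definition Median :: "(real ^ 'l) list \<Rightarrow> real ^ 'l" where
  "Median vs = (\<chi> l. median_real (map (\<lambda>v. v $ l) vs))"

definition Range_set :: "(real ^ 'l) set \<Rightarrow> (real ^ 'l) set" where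
  "Range_set A = {a. \<forall>l. \<exists>lo\<in>A. \<exists>hi\<in>A. lo $ l \<le> a $ l \<and> a $ l \<le> hi $ l}"

end

theory Submission
  imports Defs "HOL-Combinatorics.Multiset_Permutations"
begin

(* Choose N - 1 - C positions at which m_benign and m_adv agree. Each of the n2 k-subsets of these
   positions ablates both lists to the same sublist, so its action lies in A_benign. Whenever more
   than half of the D sampled subsets are of this kind, in every coordinate a majority of the values
   are coordinates of points of A_benign, and the median of a list is bounded below and above by
   members of any majority of it. The number of such subsets among D distinct uniform draws from
   the n1 subsets is hypergeometric, and p_D is its upper tail. *)

lemma length_filter_mono:
  "(\<And>x. x \<in> set xs \<Longrightarrow> P x \<Longrightarrow> Q x) \<Longrightarrow> length (filter P xs) \<le> length (filter Q xs)"
  by (induction xs) auto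

lemma length_filter_le_sort_nth:
  fixes xs :: "'a::linorder list"
  assumes "i < length xs"
  shows "Suc i \<le> length (filter (\<lambda>x. x \<le> sort xs ! i) xs)"
proof -
  have "{..i} \<subseteq> {j. j < length xs \<and> sort xs ! j \<le> sort xs ! i}"
    using assms by (auto intro: sorted_nth_mono)
  then have "card {..i} \<le> card {j. j < length (sort xs) \<and> sort xs ! j \<le> sort xs ! i}"
    by (intro card_mono) auto
  also have "\<dots> = length (filter (\<lambda>x. x \<le> sort xs ! i) (sort xs))"
    by (rule length_filter_conv_card[symmetric])
  finally show ?thesis
    by (simp add: filter_sort)
qed

lemma length_filter_ge_sort_nth:
  fixes xs :: "'a::linorder list"
  assumes "i < length xs"
  shows "length xs - i \<le> length (filter (\<lambda>x. sort xs ! i \<le> x) xs)"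
proof -
  have "{i..<length xs} \<subseteq> {j. j < length xs \<and> sort xs ! i \<le> sort xs ! j}"
    by (auto intro: sorted_nth_mono)
  then have "card {i..<length xs} \<le> card {j. j < length (sort xs) \<and> sort xs ! i \<le> sort xs ! j}"
    by (intro card_mono) auto
  also have "\<dots> = length (filter (\<lambda>x. sort xs ! i \<le> x) (sort xs))"
    by (rule length_filter_conv_card[symmetric])
  finally show ?thesis
    by (simp add: filter_sort)
qed

lemma median_real_bounds:
  assumes "xs \<noteq> []"
  shows "sort xs ! ((length xs - 1) div 2) \<le> median_real xs"
    and "median_real xs \<le> sort xs ! (length xs div 2)"
proof -
  let ?n = "length xs"
  have le: "sort xs ! (?n div 2 - 1) \<le> sort xs ! (?n div 2)"
    using assms by (intro sorted_nth_mono) auto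
  have "odd ?n \<Longrightarrow> (?n - 1) div 2 = ?n div 2" "even ?n \<Longrightarrow> (?n - 1) div 2 = ?n div 2 - 1"
    using assms by (auto elim: oddE evenE)
  with le show "sort xs ! ((length xs - 1) div 2) \<le> median_real xs"
    and "median_real xs \<le> sort xs ! (length xs div 2)"
    by (auto simp: median_real_def Let_def)
qed

lemma median_real_majority:
  assumes "length xs div 2 < length (filter P xs)"
  shows "\<exists>x\<in>set xs. P x \<and> x \<le> median_real xs"
    and "\<exists>x\<in>set xs. P x \<and> median_real xs \<le> x"
proof -
  let ?n = "length xs" and ?m = "median_real xs"
  have ne: "xs \<noteq> []" using assms by auto
  have compl: "?n div 2 < ?n - length (filter (\<lambda>x. \<not> P x) xs)"
    using assms sum_length_filter_compl[of P xs] by linarith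
  show "\<exists>x\<in>set xs. P x \<and> x \<le> ?m"
  proof (rule ccontr)
    assume "\<not> ?thesis"
    then have "length (filter (\<lambda>x. x \<le> ?m) xs) \<le> length (filter (\<lambda>x. \<not> P x) xs)"
      by (intro length_filter_mono) auto
    moreover have "length (filter (\<lambda>x. x \<le> sort xs ! ((?n - 1) div 2)) xs)
        \<le> length (filter (\<lambda>x. x \<le> ?m) xs)"
      using median_real_bounds(1)[OF ne] by (intro length_filter_mono) auto
    moreover have "Suc ((?n - 1) div 2) \<le> length (filter (\<lambda>x. x \<le> sort xs ! ((?n - 1) div 2)) xs)"
      using ne by (intro length_filter_le_sort_nth) (cases xs, auto)
    ultimately show False using compl ne by (cases xs) auto
  qed
  show "\<exists>x\<in>set xs. P x \<and> ?m \<le> x"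
  proof (rule ccontr)
    assume "\<not> ?thesis"
    then have "length (filter (\<lambda>x. ?m \<le> x) xs) \<le> length (filter (\<lambda>x. \<not> P x) xs)"
      by (intro length_filter_mono) auto
    moreover have "length (filter (\<lambda>x. sort xs ! (?n div 2) \<le> x) xs)
        \<le> length (filter (\<lambda>x. ?m \<le> x) xs)"
      using median_real_bounds(2)[OF ne] by (intro length_filter_mono) auto
    moreover have "?n - ?n div 2 \<le> length (filter (\<lambda>x. sort xs ! (?n div 2) \<le> x) xs)"
      using ne by (intro length_filter_ge_sort_nth) simp
    ultimately show False using compl by linarith
  qed
qed

lemma Median_in_Range_set:
  assumes "length vs div 2 < length (filter (\<lambda>v. v \<in> A) vs)"
  shows "Median vs \<in> Range_set A"
  unfolding Range_set_def
proof (intro CollectI allI)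
  fix l
  let ?xs = "map (\<lambda>v. v $ l) vs"
  let ?P = "\<lambda>x. \<exists>v\<in>A. v $ l = x"
  have "length (filter (\<lambda>v. v \<in> A) vs) \<le> length (filter ?P ?xs)"
    by (auto simp: o_def intro: length_filter_mono)
  with assms have maj: "length ?xs div 2 < length (filter ?P ?xs)" by simp
  have "Median vs $ l = median_real ?xs" by (simp add: Median_def)
  with median_real_majority[OF maj]
  show "\<exists>lo\<in>A. \<exists>hi\<in>A. lo $ l \<le> Median vs $ l \<and> Median vs $ l \<le> hi $ l"
    by fastforce
qed

lemma Median_in_Range_set_if_majority_drawn:
  assumes "distinct ts" "length ts div 2 < card (set ts \<inter> S)" "\<And>x. x \<in> S \<Longrightarrow> f x \<in> A"
  shows "Median (map f ts) \<in> Range_set A"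
proof (rule Median_in_Range_set)
  have "card (set ts \<inter> S) = length (filter (\<lambda>x. x \<in> S) ts)"
    using distinct_length_filter[OF assms(1)] by (simp add: Int_commute)
  also have "\<dots> \<le> length (filter (\<lambda>x. f x \<in> A) ts)"
    using assms(3) by (intro length_filter_mono) auto
  finally show "length (map f ts) div 2 < length (filter (\<lambda>v. v \<in> A) (map f ts))"
    using assms(2) by (simp add: o_def)
qed

lemma card_distinct_lists_by_set:
  assumes "finite A"
  shows "card {ts. distinct ts \<and> set ts \<subseteq> A \<and> length ts = D \<and> P (set ts)}
       = card {B. B \<subseteq> A \<and> card B = D \<and> P B} * fact D"
proof -
  let ?F = "{B. B \<subseteq> A \<and> card B = D \<and> P B}"
  have fin: "finite ?F"
    using assms by (auto intro: finite_subset[of _ "Pow A"])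
  have "{ts. distinct ts \<and> set ts \<subseteq> A \<and> length ts = D \<and> P (set ts)}
      = (\<Union>B\<in>?F. permutations_of_set B)"
    by (auto simp: permutations_of_set_def distinct_card)
  also have "card \<dots> = (\<Sum>B\<in>?F. card (permutations_of_set B))"
    using fin by (intro card_UN_disjoint) (simp_all, auto simp: permutations_of_set_def)
  also have "\<dots> = (\<Sum>B\<in>?F. fact D)"
    using assms by (intro sum.cong) (auto dest: finite_subset)
  finally show ?thesis by simp
qed

lemma card_subsets_card_Int_eq:
  assumes "finite A" "S \<subseteq> A" "j \<le> D"
  shows "card {B. B \<subseteq> A \<and> card B = D \<and> card (B \<inter> S) = j}
       = (card S choose j) * ((card A - card S) choose (D - j))"
proof -
  let ?X = "{X. X \<subseteq> S \<and> card X = j}" and ?Y = "{Y. Y \<subseteq> A - S \<and> card Y = D - j}"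
  have fin: "finite S" "finite (A - S)"
    using assms finite_subset by auto
  have fin_sub: "finite B" if "B \<subseteq> A" for B
    using that assms(1) finite_subset by blast
  have "bij_betw (\<lambda>B. (B \<inter> S, B - S)) {B. B \<subseteq> A \<and> card B = D \<and> card (B \<inter> S) = j} (?X \<times> ?Y)"
  proof (rule bij_betw_byWitness[where f' = "\<lambda>(X, Y). X \<union> Y"])
    show "(\<lambda>B. (B \<inter> S, B - S)) ` {B. B \<subseteq> A \<and> card B = D \<and> card (B \<inter> S) = j} \<subseteq> ?X \<times> ?Y"
      using assms fin_sub by (auto simp: card_Diff_subset_Int)
    have "card (X \<union> Y) = D" if "X \<subseteq> S" "card X = j" "Y \<subseteq> A - S" "card Y = D - j" for X Y
      using that fin assms(3) by (subst card_Un_disjoint) (auto intro: finite_subset)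
    moreover have "(X \<union> Y) \<inter> S = X" if "X \<subseteq> S" "Y \<subseteq> A - S" for X Y
      using that by blast
    ultimately show "(\<lambda>(X, Y). X \<union> Y) ` (?X \<times> ?Y) \<subseteq> {B. B \<subseteq> A \<and> card B = D \<and> card (B \<inter> S) = j}"
      using assms(2) by auto
  qed auto
  then have "card {B. B \<subseteq> A \<and> card B = D \<and> card (B \<inter> S) = j} = card ?X * card ?Y"
    by (simp add: bij_betw_same_card card_cartesian_product)
  then show ?thesis
    using fin assms by (simp add: n_subsets card_Diff_subset)
qed

lemma card_subsets_card_Int_ge:
  assumes "finite A" "S \<subseteq> A"
  shows "card {B. B \<subseteq> A \<and> card B = D \<and> t \<le> card (B \<inter> S)}
       = (\<Sum>j = t..D. (card S choose j) * ((card A - card S) choose (D - j)))"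
proof -
  let ?B = "\<lambda>j. {B. B \<subseteq> A \<and> card B = D \<and> card (B \<inter> S) = j}"
  have "card (B \<inter> S) \<le> card B" if "B \<subseteq> A" for B
    using that assms(1) by (intro card_mono) (auto intro: finite_subset)
  then have "{B. B \<subseteq> A \<and> card B = D \<and> t \<le> card (B \<inter> S)} = (\<Union>j\<in>{t..D}. ?B j)"
    by fastforce
  also have "card \<dots> = (\<Sum>j = t..D. card (?B j))"
    using assms(1) by (intro card_UN_disjoint) (auto intro: finite_subset[of _ "Pow A"])
  also have "\<dots> = (\<Sum>j = t..D. (card S choose j) * ((card A - card S) choose (D - j)))"
    using assms by (intro sum.cong) (auto simp: card_subsets_card_Int_eq)
  finally show ?thesis .
qed

lemma prob_ge_hypergeometric_tail:
  assumes "finite A" "S \<subseteq> A" "D \<le> card A"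
    and "\<And>ts. distinct ts \<Longrightarrow> set ts \<subseteq> A \<Longrightarrow> length ts = D \<Longrightarrow> t \<le> card (set ts \<inter> S) \<Longrightarrow> ts \<in> E"
  shows "measure_pmf.prob (pmf_of_set {ts. distinct ts \<and> set ts \<subseteq> A \<and> length ts = D}) E
       \<ge> real (\<Sum>j = t..D. (card S choose j) * ((card A - card S) choose (D - j)))
           / real (card A choose D)"
proof -
  let ?L = "{ts. distinct ts \<and> set ts \<subseteq> A \<and> length ts = D}"
  let ?tail = "{ts \<in> ?L. t \<le> card (set ts \<inter> S)}"
  have card_L: "card ?L = (card A choose D) * fact D"
    using card_distinct_lists_by_set[OF assms(1), of D "\<lambda>_. True"] assms(1)
    by (simp add: n_subsets)
  have card_tail: "card ?tail
      = (\<Sum>j = t..D. (card S choose j) * ((card A - card S) choose (D - j))) * fact D"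
    using card_distinct_lists_by_set[OF assms(1), of D "\<lambda>B. t \<le> card (B \<inter> S)"]
      card_subsets_card_Int_ge[OF assms(1,2)]
    by (simp add: conj_assoc)
  have "card ?L \<noteq> 0"
    using assms(3) by (simp add: card_L)
  then have fin: "finite ?L" and ne: "?L \<noteq> {}"
    by (auto simp: card_eq_0_iff)
  have "real (\<Sum>j = t..D. (card S choose j) * ((card A - card S) choose (D - j)))
          / real (card A choose D) = real (card ?tail) / real (card ?L)"
    unfolding card_L card_tail of_nat_mult by simp
  also have "\<dots> \<le> real (card (?L \<inter> E)) / real (card ?L)"
    using fin assms(4) by (intro divide_right_mono card_mono of_nat_mono) auto
  also have "\<dots> = measure_pmf.prob (pmf_of_set ?L) E"
    by (simp add: measure_pmf_of_set[OF ne fin])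
  finally show ?thesis .
qed

lemma nths_cong:
  "length xs = length ys \<Longrightarrow> (\<And>i. i \<in> I \<Longrightarrow> i < length xs \<Longrightarrow> xs ! i = ys ! i)
   \<Longrightarrow> nths xs I = nths ys I"
proof (induction xs arbitrary: ys I)
  case Nil
  then show ?case by simp
next
  case (Cons x xs)
  then obtain y ys' where ys: "ys = y # ys'"
    by (cases ys) auto
  have "x = y" if "0 \<in> I"
    using Cons.prems(2)[of 0] that ys by simp
  moreover have "nths xs {j. Suc j \<in> I} = nths ys' {j. Suc j \<in> I}"
    using Cons.prems ys by (intro Cons.IH) fastforce+
  ultimately show ?case
    by (simp add: ys nths_Cons)
qed

lemma Ablate_cong:
  assumes "length ms = length ms'" "\<And>i. i < length ms \<Longrightarrow> Suc i \<in> T \<Longrightarrow> ms ! i = ms' ! i"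
  shows "Ablate ms T = Ablate ms' T"
  unfolding Ablate_def using assms by (intro nths_cong) auto

lemma obtain_uncorrupted_positions:
  assumes "length ms = n" "length ms' = n" "card {i. i < n \<and> ms ! i \<noteq> ms' ! i} \<le> C"
  obtains X where "X \<subseteq> {1..n}" "card X = n - C" "\<And>T. T \<subseteq> X \<Longrightarrow> Ablate ms T = Ablate ms' T"
proof -
  let ?Bad = "{i. i < n \<and> ms ! i \<noteq> ms' ! i}"
  have "Suc ` ?Bad \<subseteq> {1..n}" by auto
  moreover have "card (Suc ` ?Bad) = card ?Bad"
    by (simp add: card_image)
  ultimately have "n - C \<le> card ({1..n} - Suc ` ?Bad)"
    using assms(3) by (simp add: card_Diff_subset finite_subset)
  then obtain X where X: "X \<subseteq> {1..n} - Suc ` ?Bad" "card X = n - C"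
    by (meson obtain_subset_with_card_n)
  have "Ablate ms T = Ablate ms' T" if "T \<subseteq> X" for T
    using assms(1,2) X(1) that by (intro Ablate_cong) auto
  with X show thesis
    by (intro that[of X]) auto
qed

theorem theorem3:
  fixes N C k D :: nat
    and pihat :: "'o \<Rightarrow> 'm list \<Rightarrow> real ^ 'l::finite"
    and Act :: "(real ^ 'l) set"
    and obs :: 'o
    and m_benign m_adv :: "'m list"
  assumes "N \<ge> 2"
    and "2 * C < N - 1"
    and "1 \<le> k" and "k \<le> N - 1"
    and "2 * ((N - 1 - C) choose k) \<ge> (N - 1) choose k"
    and "\<And>o' ms. length ms = k \<Longrightarrow> pihat o' ms \<in> Act"
    and "length m_benign = N - 1" and "length m_adv = N - 1"
    and "card {i. i < N - 1 \<and> m_benign ! i \<noteq> m_adv ! i} \<le> C"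
    and "0 < D" and "D \<le> (N - 1) choose k"
  shows
    "let A_benign = (\<Union>T\<in>Hsets (N - 1) k. {pihat obs (Ablate m_benign T)});
         n1 = (N - 1) choose k;
         n2 = (N - C - 1) choose k;
         Dt = D div 2 + 1;
         p_D = real (\<Sum>j = Dt..D. (n2 choose j) * ((n1 - n2) choose (D - j))) / real (n1 choose D);
         Ts = pmf_of_set {ts. distinct ts \<and> set ts \<subseteq> Hsets (N - 1) k \<and> length ts = D}
     in measure_pmf.prob Ts
          {ts. Median (map (\<lambda>T. pihat obs (Ablate m_adv T)) ts) \<in> Range_set A_benign} \<ge> p_D"
proof -
  define H where "H = Hsets (N - 1) k"
  define A_benign where "A_benign = (\<Union>T\<in>H. {pihat obs (Ablate m_benign T)})"
  define f where "f = (\<lambda>T. pihat obs (Ablate m_adv T))"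
  obtain X where X: "X \<subseteq> {1..N - 1}" "card X = N - 1 - C"
    and clean: "\<And>T. T \<subseteq> X \<Longrightarrow> Ablate m_benign T = Ablate m_adv T"
    using obtain_uncorrupted_positions[OF assms(7-9)] by blast
  define S where "S = {T. T \<subseteq> X \<and> card T = k}"
  have H_finite: "finite H" and card_H: "card H = (N - 1) choose k"
    by (simp_all add: H_def Hsets_def n_subsets flip: Pow_def)
  have S_sub_H: "S \<subseteq> H"
    using X(1) by (auto simp: S_def H_def Hsets_def)
  have card_S: "card S = (N - C - 1) choose k"
    using X by (simp add: S_def n_subsets finite_subset)
  have benign: "f T \<in> A_benign" if "T \<in> S" for T
  proof -
    have "T \<in> H" "T \<subseteq> X"
      using that S_sub_H by (auto simp: S_def)
    then show ?thesis
      unfolding A_benign_def by (auto simp: f_def clean intro!: bexI[of _ T])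
  qed
  have "real (\<Sum>j = D div 2 + 1..D. (card S choose j) * ((card H - card S) choose (D - j)))
          / real (card H choose D)
      \<le> measure_pmf.prob (pmf_of_set {ts. distinct ts \<and> set ts \<subseteq> H \<and> length ts = D})
          {ts. Median (map f ts) \<in> Range_set A_benign}"
  proof (rule prob_ge_hypergeometric_tail[OF H_finite S_sub_H])
    show "D \<le> card H"
      using assms(11) by (simp add: card_H)
    fix ts assume "distinct ts" "length ts = D" "D div 2 + 1 \<le> card (set ts \<inter> S)"
    with benign show "ts \<in> {ts. Median (map f ts) \<in> Range_set A_benign}"
      using Median_in_Range_set_if_majority_drawn[of ts S f A_benign] by simp
  qed
  then show ?thesis
    unfolding card_H card_S by (simp only: Let_def H_def A_benign_def f_def)
qed

end
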